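(* Suppose $\mathcal I_{CAS}=\langle\mathcal I,\chi\rangle$ and $\mathcal I'_{CAS}=\langle\mathcal I',\chi'\rangle$ are NI-congruent justified CAS-models of a DL-Lite$_R$ DKB $\mathcal K$. Then $\chi'\not\subset\chi$.
   Context: DL-Lite$_R$: pairwise disjoint countably infinite sets $\mathrm{NC}$, $\mathrm{NR}$, $\mathrm{NI}$; a role is $R$ or $R^-$; concepts $C ::= A\mid\exists R$ (left), $D ::= A\mid\neg C\mid\exists R$ (right). Axioms: $C\sqsubseteq D$, $S\sqsubseteq R$, $\mathrm{Dis}(R,S)$, $\mathrm{Inv}(R,S)$, $\mathrm{Irr}(R)$ (no reflexivity), assertions $D(a)$, $R(a,b)$, usual semantics. Standard name assumption: an infinite set $\mathrm{NI}_S\subseteq\mathrm{NI}$ of standard names is the domain of every interpretation, $c^{\mathcal I}=c$ for $c\in\mathrm{NI}_S$. Axioms are identified with universal first-order sentences $\forall\vec x\,\phi_\alpha(\vec x)$ via the standard translation with right-hand existentials Skolemized by a unary Skolem function $f_R$ per atomic role; $\alpha(\vec e):=\phi_\alpha(\vec e)$. A DKB is a finite set of DL-Lite$_R$ axioms and defeasible axioms $\mathrm D(\alpha)$. Clashing assumption $\langle\alpha,\vec e\rangle$; clashing set: satisfiable set $S$ of assertions and negated assertions with $S\cup\{\alpha(\vec e)\}$ unsatisfiable. $\langle\mathcal I,\chi\rangle$ is a CAS-model of $\mathcal K$ if $\mathcal I$ satisfies the non-defeasible axioms and $\mathcal I\models\phi_\alpha(\vec d)$ for all $\mathrm D(\alpha)\in\mathcal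 K$ and tuples $\vec d$ with $\langle\alpha,\vec d\rangle\notin\chi$. Two (CAS-)interpretations are NI-congruent if they interpret every $c\in\mathrm{NI}$ identically. $\langle\alpha,\vec e\rangle\in\chi$ is justified if some clashing set for it holds in every CAS-model $\langle\mathcal I'',\chi\rangle$ of $\mathcal K$ NI-congruent to $\langle\mathcal I,\chi\rangle$; a CAS-model is justified if all its clashing assumptions are justified. *)

theory Defs
  imports Main
begin

(* 'c = concept names NC, 'r = role names NR, 'n = individual names NI *)

datatype 'r role = Atom 'r | Inv 'r

datatype ('c,'r) lconcept = CName 'c | Ex "'r role"

(* right-hand concepts  D ::= A | \<not>C | \<exists>R ;
   A and \<exists>R are both covered by RPos, \<not>C by RNeg *)
datatype ('c,'r) rconcept = RPos "('c,'r) lconcept" | RNeg "('c,'r) lconcept"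

datatype ('c,'r,'n) axiom =
    CIncl "('c,'r) lconcept" "('c,'r) rconcept"
  | RIncl "'r role" "'r role"                     (* S \<sqsubseteq> R  (first \<sqsubseteq> second) *)
  | DisAx "'r role" "'r role"
  | InvAx "'r role" "'r role"
  | IrrAx "'r role"
  | CAssert "('c,'r) rconcept" 'n
  | RAssert "'r role" 'n 'n

(* DKB elements: ordinary axioms and defeasible axioms D(\<alpha>) *)
datatype ('c,'r,'n) dax = Strict "('c,'r,'n) axiom" | Def "('c,'r,'n) axiom"

fun is_assertion :: "('c,'r,'n) axiom \<Rightarrow> bool" where
  "is_assertion (CAssert D a) = True"
| "is_assertion (RAssert R a b) = True"
| "is_assertion _ = False"

(* number of universally quantified variables of the first-order translation \<forall>x. \<phi>_\<alpha>(x) *)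
fun arity :: "('c,'r,'n) axiom \<Rightarrow> nat" where
  "arity (CIncl C D) = 1"
| "arity (RIncl S R) = 2"
| "arity (DisAx R S) = 2"
| "arity (InvAx R S) = 2"
| "arity (IrrAx R) = 1"
| "arity (CAssert D a) = 0"
| "arity (RAssert R a b) = 0"

(* An interpretation: extensions of concept and role names, interpretation of
   individual names, and interpretation of the unary Skolem functions f_R. *)
record ('c,'r,'n) interp =
  conc :: "'c \<Rightarrow> 'n set"
  rol  :: "'r \<Rightarrow> ('n \<times> 'n) set"
  ind  :: "'n \<Rightarrow> 'n"
  skol :: "'r role \<Rightarrow> 'n \<Rightarrow> 'n"

(* Standard name assumption: the domain is NIS and c^I = c for standard names c *)
definition is_interp :: "'n set \<Rightarrow> ('c,'r,'n) interp \<Rightarrow> bool" where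
  "is_interp NIS I \<longleftrightarrow>
     (\<forall>A. conc I A \<subseteq> NIS) \<and> (\<forall>R. rol I R \<subseteq> NIS \<times> NIS) \<and>
     (\<forall>c. ind I c \<in> NIS) \<and> (\<forall>c\<in>NIS. ind I c = c) \<and>
     (\<forall>R x. x \<in> NIS \<longrightarrow> skol I R x \<in> NIS)"

fun role_ext :: "('c,'r,'n) interp \<Rightarrow> 'r role \<Rightarrow> ('n \<times> 'n) set" where
  "role_ext I (Atom R) = rol I R"
| "role_ext I (Inv R) = (rol I R)\<inverse>"

fun lholds :: "('c,'r,'n) interp \<Rightarrow> ('c,'r) lconcept \<Rightarrow> 'n \<Rightarrow> bool" where
  "lholds I (CName A) d = (d \<in> conc I A)"
| "lholds I (Ex R) d = (\<exists>d'. (d, d') \<in> role_ext I R)"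

(* right-hand side concepts; positive \<exists>R is Skolemized: R(x, f_R(x)) *)
fun rholds :: "('c,'r,'n) interp \<Rightarrow> ('c,'r) rconcept \<Rightarrow> 'n \<Rightarrow> bool" where
  "rholds I (RPos (CName A)) d = (d \<in> conc I A)"
| "rholds I (RPos (Ex R)) d = ((d, skol I R d) \<in> role_ext I R)"
| "rholds I (RNeg C) d = (\<not> lholds I C d)"

fun holds :: "('c,'r,'n) interp \<Rightarrow> ('c,'r,'n) axiom \<Rightarrow> 'n list \<Rightarrow> bool" where
  "holds I (CIncl C D) e = (lholds I C (e!0) \<longrightarrow> rholds I D (e!0))"
| "holds I (RIncl S R) e = ((e!0, e!1) \<in> role_ext I S \<longrightarrow> (e!0, e!1) \<in> role_ext I R)"
| "holds I (DisAx R S) e = (\<not> ((e!0, e!1) \<in> role_ext I R \<and> (e!0, e!1) \<in> role_ext I S))"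
| "holds I (InvAx R S) e = ((e!0, e!1) \<in> role_ext I R \<longleftrightarrow> (e!1, e!0) \<in> role_ext I S)"
| "holds I (IrrAx R) e = ((e!0, e!0) \<notin> role_ext I R)"
| "holds I (CAssert D a) e = rholds I D (ind I a)"
| "holds I (RAssert R a b) e = ((ind I a, ind I b) \<in> role_ext I R)"

definition tuples :: "'n set \<Rightarrow> ('c,'r,'n) axiom \<Rightarrow> 'n list set" where
  "tuples NIS \<alpha> = {e. length e = arity \<alpha> \<and> set e \<subseteq> NIS}"

definition sat_axiom :: "'n set \<Rightarrow> ('c,'r,'n) interp \<Rightarrow> ('c,'r,'n) axiom \<Rightarrow> bool" where
  "sat_axiom NIS I \<alpha> \<longleftrightarrow> (\<forall>e\<in>tuples NIS \<alpha>. holds I \<alpha> e)"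

datatype ('c,'r,'n) lit = PosL "('c,'r,'n) axiom" | NegL "('c,'r,'n) axiom"

fun lit_axiom :: "('c,'r,'n) lit \<Rightarrow> ('c,'r,'n) axiom" where
  "lit_axiom (PosL \<beta>) = \<beta>" | "lit_axiom (NegL \<beta>) = \<beta>"

fun lit_holds :: "('c,'r,'n) interp \<Rightarrow> ('c,'r,'n) lit \<Rightarrow> bool" where
  "lit_holds I (PosL \<beta>) = holds I \<beta> []"
| "lit_holds I (NegL \<beta>) = (\<not> holds I \<beta> [])"

definition set_holds :: "('c,'r,'n) interp \<Rightarrow> ('c,'r,'n) lit set \<Rightarrow> bool" where
  "set_holds I S \<longleftrightarrow> (\<forall>l\<in>S. lit_holds I l)"

definition clashing_set ::
  "'n set \<Rightarrow> ('c,'r,'n) axiom \<Rightarrow> 'n list \<Rightarrow> ('c,'r,'n) lit set \<Rightarrow> bool" where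
  "clashing_set NIS \<alpha> e S \<longleftrightarrow>
     (\<forall>l\<in>S. is_assertion (lit_axiom l)) \<and>
     (\<exists>I. is_interp NIS I \<and> set_holds I S) \<and>
     \<not> (\<exists>I. is_interp NIS I \<and> set_holds I S \<and> holds I \<alpha> e)"

definition clashing_assumptions ::
  "'n set \<Rightarrow> ('c,'r,'n) dax set \<Rightarrow> (('c,'r,'n) axiom \<times> 'n list) set" where
  "clashing_assumptions NIS K = {(\<alpha>, e). Def \<alpha> \<in> K \<and> e \<in> tuples NIS \<alpha>}"

definition cas_model ::
  "'n set \<Rightarrow> ('c,'r,'n) dax set \<Rightarrow> ('c,'r,'n) interp \<Rightarrow> (('c,'r,'n) axiom \<times> 'n list) set \<Rightarrow> bool" where
  "cas_model NIS K I \<chi> \<longleftrightarrow>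
     is_interp NIS I \<and> \<chi> \<subseteq> clashing_assumptions NIS K \<and>
     (\<forall>\<alpha>. Strict \<alpha> \<in> K \<longrightarrow> sat_axiom NIS I \<alpha>) \<and>
     (\<forall>\<alpha> e. Def \<alpha> \<in> K \<longrightarrow> e \<in> tuples NIS \<alpha> \<longrightarrow> (\<alpha>, e) \<notin> \<chi> \<longrightarrow> holds I \<alpha> e)"

definition NI_congruent :: "('c,'r,'n) interp \<Rightarrow> ('c,'r,'n) interp \<Rightarrow> bool" where
  "NI_congruent I I' \<longleftrightarrow> (\<forall>c. ind I c = ind I' c)"

definition justified_ca ::
  "'n set \<Rightarrow> ('c,'r,'n) dax set \<Rightarrow> ('c,'r,'n) interp \<Rightarrow> (('c,'r,'n) axiom \<times> 'n list) set
     \<Rightarrow> ('c,'r,'n) axiom \<Rightarrow> 'n list \<Rightarrow> bool" where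
  "justified_ca NIS K I \<chi> \<alpha> e \<longleftrightarrow>
     (\<exists>S. clashing_set NIS \<alpha> e S \<and>
          (\<forall>I''. cas_model NIS K I'' \<chi> \<and> NI_congruent I'' I \<longrightarrow> set_holds I'' S))"

definition justified_cas_model ::
  "'n set \<Rightarrow> ('c,'r,'n) dax set \<Rightarrow> ('c,'r,'n) interp \<Rightarrow> (('c,'r,'n) axiom \<times> 'n list) set \<Rightarrow> bool" where
  "justified_cas_model NIS K I \<chi> \<longleftrightarrow>
     cas_model NIS K I \<chi> \<and> (\<forall>(\<alpha>, e)\<in>\<chi>. justified_ca NIS K I \<chi> \<alpha> e)"

end

theory Submission
  imports Defs
begin

text \<open>If \<open>\<chi>' \<subset> \<chi>\<close>, then \<open>\<langle>I', \<chi>\<rangle>\<close> is again a CAS-model, NI-congruent to \<open>\<langle>I, \<chi>\<rangle>\<close>.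
  Pick \<open>\<langle>\<alpha>, e\<rangle> \<in> \<chi> - \<chi>'\<close>: its justification in \<open>\<chi>\<close> gives a clashing set holding in \<open>I'\<close>,
  so \<open>\<alpha>(e)\<close> fails in \<open>I'\<close>; but \<open>\<alpha>(e)\<close> holds in \<open>I'\<close> because \<open>\<langle>\<alpha>, e\<rangle> \<notin> \<chi>'\<close>.\<close>

lemma NI_congruent_sym: "NI_congruent I I' \<Longrightarrow> NI_congruent I' I"
  unfolding NI_congruent_def by simp

lemma cas_model_mono:
  assumes "cas_model NIS K I \<chi>'" "\<chi>' \<subseteq> \<chi>" "\<chi> \<subseteq> clashing_assumptions NIS K"
  shows "cas_model NIS K I \<chi>"
  using assms unfolding cas_model_def by blast

lemma cas_model_holds_if_not_assumed:
  assumes "cas_model NIS K I \<chi>" "(\<alpha>, e) \<in> clashing_assumptions NIS K" "(\<alpha>, e) \<notin> \<chi>"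
  shows "holds I \<alpha> e"
  using assms unfolding cas_model_def clashing_assumptions_def by blast

lemma justified_ca_not_holds:
  assumes "justified_ca NIS K I \<chi> \<alpha> e"
    and "cas_model NIS K I'' \<chi>" "NI_congruent I'' I"
  shows "\<not> holds I'' \<alpha> e"
proof -
  obtain S where clash: "clashing_set NIS \<alpha> e S"
    and "\<forall>J. cas_model NIS K J \<chi> \<and> NI_congruent J I \<longrightarrow> set_holds J S"
    using assms(1) unfolding justified_ca_def by blast
  with assms(2,3) have "set_holds I'' S" by blast
  moreover have "is_interp NIS I''"
    using assms(2) unfolding cas_model_def by blast
  ultimately show ?thesis
    using clash unfolding clashing_set_def by blast
qed

lemma justified_cas_model_not_psubset:
  assumes "justified_cas_model NIS K I \<chi>" "cas_model NIS K I' \<chi>'" "NI_congruent I I'"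
  shows "\<not> \<chi>' \<subset> \<chi>"
proof
  assume "\<chi>' \<subset> \<chi>"
  then obtain \<alpha> e where "(\<alpha>, e) \<in> \<chi>" "(\<alpha>, e) \<notin> \<chi>'" by auto
  have "cas_model NIS K I \<chi>" "justified_ca NIS K I \<chi> \<alpha> e"
    using assms(1) \<open>(\<alpha>, e) \<in> \<chi>\<close> unfolding justified_cas_model_def by auto
  then have \<chi>_ca: "\<chi> \<subseteq> clashing_assumptions NIS K"
    unfolding cas_model_def by blast
  have "cas_model NIS K I' \<chi>"
    using cas_model_mono assms(2) \<open>\<chi>' \<subset> \<chi>\<close> \<chi>_ca by blast
  with \<open>justified_ca NIS K I \<chi> \<alpha> e\<close> assms(3) have "\<not> holds I' \<alpha> e"
    by (blast dest: justified_ca_not_holds NI_congruent_sym)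
  moreover have "holds I' \<alpha> e"
    using cas_model_holds_if_not_assumed assms(2) \<chi>_ca \<open>(\<alpha>, e) \<in> \<chi>\<close> \<open>(\<alpha>, e) \<notin> \<chi>'\<close>
    by blast
  ultimately show False by contradiction
qed

theorem proposition5:
  fixes NIS :: "nat set"
    and K :: "(nat, nat, nat) dax set"
    and I I' :: "(nat, nat, nat) interp"
    and \<chi> \<chi>' :: "((nat, nat, nat) axiom \<times> nat list) set"
  assumes "infinite NIS"
    and "finite K"
    and "justified_cas_model NIS K I \<chi>"
    and "justified_cas_model NIS K I' \<chi>'"
    and "NI_congruent I I'"
  shows "\<not> (\<chi>' \<subset> \<chi>)"
proof -
  have "cas_model NIS K I' \<chi>'"
    using assms(4) unfolding justified_cas_model_def by blast
  then show ?thesis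
    using justified_cas_model_not_psubset assms(3,5) by blast
qed

end
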